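(* Under the standing setting, if $f_0\in[0,\infty)$ and $f_\infty\in[0,\infty)$, then there exists $\overline\lambda>0$ such that problem (P$_\lambda$) has no positive solution for any $\lambda\in[0,\overline\lambda)$.
   Context: Standing setting. $\varphi:\mathbb{R}\to\mathbb{R}$ is an odd, increasing homeomorphism satisfying condition (A): there exist increasing homeomorphisms $\psi_1,\psi_2:[0,\infty)\to[0,\infty)$ such that $\varphi(x)\psi_1(y)\le \varphi(xy)\le \varphi(x)\psi_2(y)$ for all $x,y\ge 0$. Let $c,d\in C([0,1],(0,\infty))$, and $\|\cdot\|_\infty$ the maximum norm on $C[0,1]$. Let $f\in C([0,\infty),[0,\infty))$ with $f(s)>0$ for $s>0$, and write $f_0=\lim_{s\to0^+}f(s)/\varphi(s)$, $f_\infty=\lim_{s\to\infty}f(s)/\varphi(s)$ (assumed to exist in $[0,\infty]$ whenever referred to). Let $h\in C((0,1),[0,\infty))$, $h\not\equiv 0$, with $\int_0^{1/2}\psi_1^{-1}\big(\int_s^{1/2}h(\tau)d\tau\big)ds+\int_{1/2}^1\psi_1^{-1}\big(\int_{1/2}^s h(\tau)d\tau\big)ds<\infty$. Notation attached to $h$: $\alpha_h=\sup\{x\in(0,1): h=0 \text{ on }(0,x)\}$ ($0$ if empty); $\beta_h=\inf\{x\in(0,1): h=0\text{ on }(x,1)\}$ ($1$ if empty); $\bar\alpha_h=\sup\{x\in(\alpha_h,1]: h>0 \text{ on }(\alpha_h,x)\}$; $\bar\beta_h=\inf\{x\in[0,\beta_h): h>0\text{ on }(x,\beta_h)\}$; $\gamma_h^1=(3\alpha_h+\bar\alpha_h)/4$,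 $\gamma_h^2=(\bar\beta_h+3\beta_h)/4$. It is assumed that $0\le\alpha_h<\gamma_h^1<\gamma_h^2<\beta_h\le 1$. For $\lambda\ge0$, problem (P$_\lambda$) is: $(d(t)\varphi(c(t)u'(t)))'+\lambda h(t)f(u(t))=0$ for $t\in(0,1)$, $u(0)=u(1)=0$. A solution is $u\in C[0,1]\cap C^1(0,1)$ such that $t\mapsto d(t)\varphi(c(t)u'(t))$ is continuously differentiable on $(0,1)$ and the equation and boundary conditions hold; it is positive if $u(t)>0$ for all $t\in(0,1)$. *)

theory Defs
  imports "HOL-Analysis.Analysis"
begin

definition incr_homeo_pos :: "(real \<Rightarrow> real) \<Rightarrow> bool" where
  "incr_homeo_pos \<psi> \<longleftrightarrow> (\<exists>g. homeomorphism {0..} {0..} \<psi> g) \<and> strict_mono_on {0..} \<psi>"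

definition phi_cond_A :: "(real \<Rightarrow> real) \<Rightarrow> (real \<Rightarrow> real) \<Rightarrow> (real \<Rightarrow> real) \<Rightarrow> bool" where
  "phi_cond_A \<phi> \<psi>1 \<psi>2 \<longleftrightarrow>
     (\<exists>g. homeomorphism UNIV UNIV \<phi> g) \<and> strict_mono \<phi> \<and> (\<forall>x. \<phi> (-x) = - \<phi> x) \<and>
     incr_homeo_pos \<psi>1 \<and> incr_homeo_pos \<psi>2 \<and>
     (\<forall>x\<ge>0. \<forall>y\<ge>0. \<phi> x * \<psi>1 y \<le> \<phi> (x*y) \<and> \<phi> (x*y) \<le> \<phi> x * \<psi>2 y)"

definition alpha_h :: "(real \<Rightarrow> real) \<Rightarrow> real" where
  "alpha_h h = (let S = {x\<in>{0<..<1}. \<forall>t\<in>{0<..<x}. h t = 0} in if S = {} then 0 else Sup S)"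

definition beta_h :: "(real \<Rightarrow> real) \<Rightarrow> real" where
  "beta_h h = (let S = {x\<in>{0<..<1}. \<forall>t\<in>{x<..<1}. h t = 0} in if S = {} then 1 else Inf S)"

text \<open>If the defining set is empty we use alpha_h (resp. beta_h), so the standing
  assumption alpha_h < gamma1 (resp. gamma2 < beta_h) fails.\<close>
definition bar_alpha_h :: "(real \<Rightarrow> real) \<Rightarrow> real" where
  "bar_alpha_h h = (let S = {x\<in>{alpha_h h<..1}. \<forall>t\<in>{alpha_h h<..<x}. h t > 0}
                    in if S = {} then alpha_h h else Sup S)"

definition bar_beta_h :: "(real \<Rightarrow> real) \<Rightarrow> real" where
  "bar_beta_h h = (let S = {x\<in>{0..<beta_h h}. \<forall>t\<in>{x<..<beta_h h}. h t > 0}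
                   in if S = {} then beta_h h else Inf S)"

definition gamma1_h :: "(real \<Rightarrow> real) \<Rightarrow> real" where
  "gamma1_h h = (3 * alpha_h h + bar_alpha_h h) / 4"

definition gamma2_h :: "(real \<Rightarrow> real) \<Rightarrow> real" where
  "gamma2_h h = (bar_beta_h h + 3 * beta_h h) / 4"

definition is_solution ::
  "(real \<Rightarrow> real) \<Rightarrow> (real \<Rightarrow> real) \<Rightarrow> (real \<Rightarrow> real) \<Rightarrow> (real \<Rightarrow> real) \<Rightarrow> (real \<Rightarrow> real)
   \<Rightarrow> real \<Rightarrow> (real \<Rightarrow> real) \<Rightarrow> bool" where
  "is_solution \<phi> c d h f lam u \<longleftrightarrow>
     continuous_on {0..1} u \<and>
     (\<exists>u' w'. (\<forall>t\<in>{0<..<1}. (u has_real_derivative u' t) (at t)) \<and> continuous_on {0<..<1} u' \<and>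
        (\<forall>t\<in>{0<..<1}. ((\<lambda>s. d s * \<phi> (c s * u' s)) has_real_derivative w' t) (at t)) \<and>
        continuous_on {0<..<1} w' \<and>
        (\<forall>t\<in>{0<..<1}. w' t + lam * h t * f (u t) = 0)) \<and>
     u 0 = 0 \<and> u 1 = 0"

definition is_pos_solution ::
  "(real \<Rightarrow> real) \<Rightarrow> (real \<Rightarrow> real) \<Rightarrow> (real \<Rightarrow> real) \<Rightarrow> (real \<Rightarrow> real) \<Rightarrow> (real \<Rightarrow> real)
   \<Rightarrow> real \<Rightarrow> (real \<Rightarrow> real) \<Rightarrow> bool" where
  "is_pos_solution \<phi> c d h f lam u \<longleftrightarrow> is_solution \<phi> c d h f lam u \<and> (\<forall>t\<in>{0<..<1}. u t > 0)"

end

theory Submission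
  imports Defs
begin

(*
  A positive solution u attains its maximum M at an interior point t0, where u' vanishes; reflecting
  t to 1 - t we may assume t0 <= 1/2. Finiteness of f_0 and f_inf gives f <= K phi on (0, inf), so
  integrating the equation from t0 bounds the flux: d phi(c u') <= lam K phi(M) H(s) on (0, t0], with
  H(s) the integral of h over [s, 1/2]. Condition (A) turns this into
  u' <= (M / min c) psi1^-1(mu H(s)) with mu = lam K / min d, and by monotone convergence the
  integrability hypothesis on h makes the integral of psi1^-1(mu H) over (0, 1/2) smaller than
  (min c) / 2 once mu is small. Then u >= M/2 on (0, t0], contradicting u(0) = 0.
*)

lemma incr_homeo_pos_inverse:
  fixes \<psi> :: "real \<Rightarrow> real"
  assumes "incr_homeo_pos \<psi>"
  defines "g \<equiv> the_inv_into {0..} \<psi>"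
  shows "z \<ge> 0 \<Longrightarrow> g z \<ge> 0" and "z \<ge> 0 \<Longrightarrow> \<psi> (g z) = z"
    and "0 \<le> a \<Longrightarrow> a \<le> b \<Longrightarrow> g a \<le> g b"
    and "continuous_on {0..} g" and "g 0 = 0"
proof -
  obtain g0 where hom: "homeomorphism {0..} {0..} \<psi> g0" and mono: "strict_mono_on {0..} \<psi>"
    using assms(1) unfolding incr_homeo_pos_def by blast
  have inj: "inj_on \<psi> {0..}"
    using mono strict_mono_on_imp_inj_on by blast
  have g0: "g0 z \<ge> 0 \<and> \<psi> (g0 z) = z" if "z \<ge> 0" for z
    using hom that unfolding homeomorphism_def by force
  have g_eq: "g z = g0 z" if "z \<ge> 0" for z
    unfolding g_def using g0[OF that] inj by (metis atLeast_iff the_inv_into_f_f)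
  show nonneg: "g z \<ge> 0" and right_inv: "\<psi> (g z) = z" if "z \<ge> 0" for z
    using g0 g_eq that by auto
  show "g a \<le> g b" if "0 \<le> a" "a \<le> b" for a b
  proof (rule ccontr)
    assume "\<not> g a \<le> g b"
    then have "\<psi> (g b) < \<psi> (g a)"
      using mono nonneg that by (simp add: strict_mono_onD)
    then show False
      using right_inv that by simp
  qed
  show "continuous_on {0..} g"
    using hom continuous_on_cong[of "{0..}" "{0..}" g g0] g_eq unfolding homeomorphism_def by auto
  show "g 0 = 0"
  proof (rule ccontr)
    assume "g 0 \<noteq> 0"
    then have "\<psi> 0 < \<psi> (g 0)"
      using mono nonneg[of 0] by (simp add: strict_mono_onD)
    moreover have "\<psi> 0 \<ge> 0"
      using hom unfolding homeomorphism_def by force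
    ultimately show False
      using right_inv[of 0] by simp
  qed
qed

lemma phi_cond_AD:
  assumes "phi_cond_A \<phi> \<psi>1 \<psi>2"
  shows "continuous_on A \<phi>" and "\<phi> x \<le> \<phi> y \<longleftrightarrow> x \<le> y" and "\<phi> (- x) = - \<phi> x"
    and "\<phi> 0 = 0" and "0 < \<phi> x \<longleftrightarrow> 0 < x" and "incr_homeo_pos \<psi>1"
proof -
  obtain \<phi>_inv where "homeomorphism UNIV UNIV \<phi> \<phi>_inv" and "strict_mono \<phi>"
    and odd: "\<forall>x. \<phi> (- x) = - \<phi> x" and "incr_homeo_pos \<psi>1"
    using assms unfolding phi_cond_A_def by blast
  then show "continuous_on A \<phi>"
    unfolding homeomorphism_def by (meson continuous_on_subset subset_UNIV)
  show le: "\<phi> x \<le> \<phi> y \<longleftrightarrow> x \<le> y" for x y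
    using \<open>strict_mono \<phi>\<close> by (simp add: strict_mono_less_eq)
  show "\<phi> (- x) = - \<phi> x"
    using odd by blast
  show "\<phi> 0 = 0"
    using odd[rule_format, of 0] by simp
  then show "0 < \<phi> x \<longleftrightarrow> 0 < x"
    using le[of x 0] by (simp add: not_le[symmetric])
  show "incr_homeo_pos \<psi>1"
    by fact
qed

lemma phi_cond_A_le_imp_le:
  assumes phiA: "phi_cond_A \<phi> \<psi>1 \<psi>2" and "M \<ge> 0" and "z \<ge> 0" and "\<phi> v \<le> \<phi> M * z"
  shows "v \<le> M * the_inv_into {0..} \<psi>1 z"
proof -
  define g where "g = the_inv_into {0..} \<psi>1"
  note g = incr_homeo_pos_inverse[OF phi_cond_AD(6)[OF phiA], folded g_def]
  have "\<phi> M * \<psi>1 (g z) \<le> \<phi> (M * g z)"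
    using phiA \<open>M \<ge> 0\<close> g(1)[OF \<open>z \<ge> 0\<close>] unfolding phi_cond_A_def by blast
  then have "\<phi> v \<le> \<phi> (M * g z)"
    using g(2)[OF \<open>z \<ge> 0\<close>] assms(4) by simp
  then show ?thesis
    unfolding g_def using phi_cond_AD(2)[OF phiA] by blast
qed

lemma le_const_mult_of_ratio_tendsto:
  fixes f \<phi> :: "real \<Rightarrow> real"
  assumes "continuous_on {0<..} f" and "continuous_on {0<..} \<phi>" and "\<forall>s>0. \<phi> s > 0"
    and "((\<lambda>s. f s / \<phi> s) \<longlongrightarrow> l0) (at_right 0)" and "((\<lambda>s. f s / \<phi> s) \<longlongrightarrow> linf) at_top"
  shows "\<exists>K>0. \<forall>s>0. f s \<le> K * \<phi> s"
proof -
  define r where "r s = f s / \<phi> s" for s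
  have "eventually (\<lambda>s. r s < l0 + 1) (at_right 0)"
    using order_tendstoD(2)[OF assms(4)] unfolding r_def by simp
  then obtain \<delta> where "\<delta> > 0" and near0: "\<And>s. 0 < s \<Longrightarrow> s < \<delta> \<Longrightarrow> r s < l0 + 1"
    unfolding eventually_at_right_field by auto
  have "eventually (\<lambda>s. r s < linf + 1) at_top"
    using order_tendstoD(2)[OF assms(5)] unfolding r_def by simp
  then obtain T where near_top: "\<And>s. s \<ge> T \<Longrightarrow> r s < linf + 1"
    unfolding eventually_at_top_linorder by auto
  have "\<phi> s \<noteq> 0" if "s \<in> {\<delta>..max \<delta> T}" for s
    using that \<open>\<delta> > 0\<close> assms(3)[rule_format, of s] by auto
  then have "continuous_on {\<delta>..max \<delta> T} r"
    unfolding r_def using \<open>\<delta> > 0\<close>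
    by (intro continuous_on_divide continuous_on_subset[OF assms(1)] continuous_on_subset[OF assms(2)])
       auto
  then obtain x0 where mid: "\<And>s. s \<in> {\<delta>..max \<delta> T} \<Longrightarrow> r s \<le> r x0"
    using continuous_attains_sup[of "{\<delta>..max \<delta> T}" r] by fastforce
  define K where "K = max 1 (max (l0 + 1) (max (linf + 1) (r x0)))"
  have "r s \<le> K" if "s > 0" for s
  proof -
    consider "s < \<delta>" | "s \<ge> T" | "s \<in> {\<delta>..max \<delta> T}"
      by (cases "s < \<delta>"; cases "s \<ge> T") auto
    then show ?thesis
      using near0[OF that] near_top[of s] mid[of s] unfolding K_def le_max_iff_disj by cases force+
  qed
  then have "f s \<le> K * \<phi> s" if "s > 0" for s
    using assms(3) that unfolding r_def by (simp add: pos_divide_le_eq)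
  moreover have "K > 0"
    unfolding K_def by simp
  ultimately show ?thesis
    by blast
qed

lemma pos_lower_bound_on_compact:
  fixes c :: "'a::topological_space \<Rightarrow> real"
  assumes "compact S" and "continuous_on S c" and "\<forall>t\<in>S. c t > 0"
  shows "\<exists>m>0. \<forall>t\<in>S. m \<le> c t"
proof (cases "S = {}")
  case False
  then obtain t0 where "t0 \<in> S" and "\<forall>t\<in>S. c t0 \<le> c t"
    using continuous_attains_inf[OF assms(1) _ assms(2)] by blast
  then show ?thesis
    using assms(3) by blast
qed (auto intro: exI[of _ 1])

lemma le_divide_of_mult_le:
  fixes m c x y :: real
  assumes "0 < m" and "m \<le> c" and "0 \<le> x" and "c * y \<le> x"
  shows "y \<le> x / m"
proof (cases "y \<le> 0")
  case True
  then show ?thesis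
    using assms(1,3) by (meson divide_nonneg_pos order_trans)
next
  case False
  then have "m * y \<le> x"
    using assms(2,4) mult_right_mono[of m c y] by linarith
  then show ?thesis
    using assms(1) by (simp add: pos_le_divide_eq mult.commute)
qed

lemma borel_measurable_ennreal_indicator_continuous_on:
  fixes F :: "real \<Rightarrow> real"
  assumes "open A" and "continuous_on A F"
  shows "(\<lambda>x. ennreal (F x) * indicator A x) \<in> borel_measurable borel"
proof -
  have "(\<lambda>x. indicator A x *\<^sub>R F x) \<in> borel_measurable borel"
    using assms by (intro borel_measurable_continuous_on_indicator) auto
  then have "(\<lambda>x. ennreal (indicator A x *\<^sub>R F x)) \<in> borel_measurable borel"
    by measurable
  also have "(\<lambda>x. ennreal (indicator A x *\<^sub>R F x)) = (\<lambda>x. ennreal (F x) * indicator A x)"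
    by (auto simp: indicator_def)
  finally show ?thesis .
qed

lemma small_scale_set_nn_integral_less:
  fixes g G :: "real \<Rightarrow> real"
  assumes "open A" and G_cont: "continuous_on A G" and G_nonneg: "\<forall>s\<in>A. G s \<ge> 0"
    and g_cont: "continuous_on {0..} g" and g_mono: "\<And>a b. 0 \<le> a \<Longrightarrow> a \<le> b \<Longrightarrow> g a \<le> g b"
    and "g 0 = 0"
    and finite: "(\<integral>\<^sup>+ s\<in>A. ennreal (g (G s)) \<partial>lborel) < \<infinity>" and "\<epsilon> > 0"
  shows "\<exists>\<mu>>0. (\<integral>\<^sup>+ s\<in>A. ennreal (g (\<mu> * G s)) \<partial>lborel) < ennreal \<epsilon>"
proof -
  define F where "F i s = ennreal (g (G s / real (Suc i))) * indicator A s" for i s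
  have F_meas: "F i \<in> borel_measurable lborel" for i
  proof -
    have "continuous_on A (\<lambda>s. g (G s / real (Suc i)))"
      by (rule continuous_on_compose2[OF g_cont]) (auto intro!: continuous_intros G_cont simp: G_nonneg)
    then show ?thesis
      unfolding F_def using \<open>open A\<close> by (simp add: borel_measurable_ennreal_indicator_continuous_on)
  qed
  have F_dec: "F (Suc i) s \<le> F i s" for i s
  proof (cases "s \<in> A")
    case True
    then have "G s / real (Suc (Suc i)) \<le> G s / real (Suc i)"
      using G_nonneg by (intro divide_left_mono) auto
    then show ?thesis
      unfolding F_def using True G_nonneg g_mono by (auto intro: ennreal_leI)
  qed (simp add: F_def)
  have F_lim: "(INF i. F i s) = 0" for s
  proof (cases "s \<in> A")
    case True
    have "(\<lambda>i. G s * inverse (real (Suc i))) \<longlonglongrightarrow> 0"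
      using tendsto_mult_right_zero[OF LIMSEQ_inverse_real_of_nat] by simp
    then have "(\<lambda>i. g (G s * inverse (real (Suc i)))) \<longlonglongrightarrow> g 0"
      by (rule continuous_on_tendsto_compose[OF g_cont]) (auto simp: G_nonneg True)
    from tendsto_ennrealI[OF this] have "(\<lambda>i. F i s) \<longlonglongrightarrow> 0"
      using True \<open>g 0 = 0\<close> unfolding F_def by (simp add: divide_inverse)
    moreover have "decseq (\<lambda>i. F i s)"
      using F_dec by (rule decseq_SucI)
    ultimately show ?thesis
      using LIMSEQ_INF LIMSEQ_unique by blast
  qed (simp add: F_def)
  have "(INF i. integral\<^sup>N lborel (F i)) = (\<integral>\<^sup>+ s. (INF i. F i s) \<partial>lborel)"
    using finite F_dec F_meas
    by (intro nn_integral_monotone_convergence_INF_AE'[symmetric]) (auto simp: F_def)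
  also have "\<dots> < ennreal \<epsilon>"
    using F_lim \<open>\<epsilon> > 0\<close> by simp
  finally obtain i where "integral\<^sup>N lborel (F i) < ennreal \<epsilon>"
    by (auto simp: INF_less_iff)
  then have "(\<integral>\<^sup>+ s\<in>A. ennreal (g (1 / real (Suc i) * G s)) \<partial>lborel) < ennreal \<epsilon>"
    unfolding F_def by simp
  then show ?thesis
    by (intro exI[of _ "1 / real (Suc i)"]) simp
qed

lemma ennreal_integral_le_set_nn_integral:
  fixes F :: "real \<Rightarrow> real"
  assumes "continuous_on {a..b} F" and "\<forall>x\<in>{a..b}. F x \<ge> 0" and "{a<..<b} \<subseteq> A"
  shows "ennreal (integral {a..b} F) \<le> (\<integral>\<^sup>+ x\<in>A. ennreal (F x) \<partial>lborel)"
proof -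
  have "(F has_integral integral {a..b} F) {a..b}"
    using integrable_continuous_interval[OF assms(1)] by blast
  then have "ennreal (integral {a..b} F) = (\<integral>\<^sup>+ x. ennreal (F x) * indicator {a..b} x \<partial>lborel)"
    using nn_integral_has_integral_lebesgue' assms(2) by metis
  also have "\<dots> \<le> (\<integral>\<^sup>+ x\<in>A. ennreal (F x) \<partial>lborel)"
  proof (rule nn_integral_mono_AE)
    show "AE x in lborel. ennreal (F x) * indicator {a..b} x \<le> ennreal (F x) * indicator A x"
      using AE_lborel_singleton[of a] AE_lborel_singleton[of b]
      by eventually_elim (use assms(3) in \<open>auto simp: indicator_def subset_eq\<close>)
  qed
  finally show ?thesis .
qed

lemma deriv_le_imp_diff_le_integral:
  fixes F F' G :: "real \<Rightarrow> real"
  assumes "a \<le> b" and "\<And>x. x \<in> {a..b} \<Longrightarrow> (F has_real_derivative F' x) (at x)"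
    and "G integrable_on {a..b}" and "\<And>x. x \<in> {a..b} \<Longrightarrow> F' x \<le> G x"
  shows "F b - F a \<le> integral {a..b} G"
proof -
  have "(F' has_integral (F b - F a)) {a..b}"
    using assms(1,2)
    by (intro fundamental_theorem_of_calculus)
       (auto simp: has_real_derivative_iff_has_vector_derivative[symmetric] intro: has_field_derivative_at_within)
  then show ?thesis
    using has_integral_le assms(3,4) by blast
qed

lemma continuous_on_integral_lower_limit:
  fixes h :: "real \<Rightarrow> real"
  assumes "continuous_on {a<..<b} h" and "c < b"
  shows "continuous_on {a<..<c} (\<lambda>s. integral {s..c} h)"
proof (rule continuous_at_imp_continuous_on, intro ballI)
  fix x assume x: "x \<in> {a<..<c}"
  have "h integrable_on {(a + x) / 2..c}"
    using x assms by (intro integrable_continuous_interval continuous_on_subset[OF assms(1)]) auto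
  then have "continuous_on {(a + x) / 2..c} (\<lambda>s. integral {s..c} h)"
    by (rule indefinite_integral_continuous_1')
  then show "isCont (\<lambda>s. integral {s..c} h) x"
    using x by (intro continuous_on_interior) auto
qed

lemma continuous_on_comp_integral_lower_limit:
  fixes g h :: "real \<Rightarrow> real"
  assumes g: "continuous_on {0..} g" and h: "continuous_on {0<..<1} h" "\<forall>t\<in>{0<..<1}. h t \<ge> 0"
    and "\<mu> \<ge> 0" and "0 < a" and "b < 1"
  shows "continuous_on {a..b} (\<lambda>s. g (\<mu> * integral {s..b} h))"
proof (rule continuous_on_compose2[of "{0..}" g])
  have "h integrable_on {a..b}"
    using assms by (intro integrable_continuous_interval continuous_on_subset[OF h(1)]) auto
  then show "continuous_on {a..b} (\<lambda>s. \<mu> * integral {s..b} h)"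
    by (intro continuous_intros indefinite_integral_continuous_1')
  show "(\<lambda>s. \<mu> * integral {s..b} h) ` {a..b} \<subseteq> {0..}"
    using assms h(2) by (auto intro!: mult_nonneg_nonneg integral_nonneg integrable_continuous_interval continuous_on_subset[OF h(1)])
qed (rule g)

lemma integral_reflect_at_one:
  fixes h :: "real \<Rightarrow> real"
  shows "integral {a..b} (\<lambda>x. h (1 - x)) = integral {1 - b..1 - a} h"
  using Henstock_Kurzweil_Integration.integral_reflect_real[of "-a" "-b" "\<lambda>y. h (y + 1)"] integral_shift_real_ivl[of "1 - b" 1 "1 - a" h]
  by simp

lemma set_nn_integral_reflect_at_one:
  fixes F :: "real \<Rightarrow> real"
  assumes "continuous_on {a<..<b} F"
  shows "(\<integral>\<^sup>+ x\<in>{1 - b<..<1 - a}. ennreal (F (1 - x)) \<partial>lborel) = (\<integral>\<^sup>+ x\<in>{a<..<b}. ennreal (F x) \<partial>lborel)"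
proof -
  have "(\<lambda>x. ennreal (F x) * indicator {a<..<b} x) \<in> borel_measurable borel"
    using assms by (simp add: borel_measurable_ennreal_indicator_continuous_on)
  then have "(\<integral>\<^sup>+ x\<in>{a<..<b}. ennreal (F x) \<partial>lborel)
      = (\<integral>\<^sup>+ x. ennreal (F (1 + -1 * x)) * indicator {a<..<b} (1 + -1 * x) \<partial>lborel)"
    by (subst nn_integral_real_affine[of _ "-1" 1]) simp_all
  also have "\<dots> = (\<integral>\<^sup>+ x\<in>{1 - b<..<1 - a}. ennreal (F (1 - x)) \<partial>lborel)"
    by (intro nn_integral_cong) (auto simp: indicator_def)
  finally show ?thesis ..
qed

lemma is_pos_solution_reflect:
  assumes odd: "\<And>x. \<phi> (- x) = - \<phi> x" and "is_pos_solution \<phi> c d h f lam u"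
  shows "is_pos_solution \<phi> (\<lambda>t. c (1 - t)) (\<lambda>t. d (1 - t)) (\<lambda>t. h (1 - t)) f lam (\<lambda>t. u (1 - t))"
proof -
  obtain u' w' where u_cont: "continuous_on {0..1} u"
    and u': "\<forall>t\<in>{0<..<1}. (u has_real_derivative u' t) (at t)" and u'_cont: "continuous_on {0<..<1} u'"
    and w': "\<forall>t\<in>{0<..<1}. ((\<lambda>s. d s * \<phi> (c s * u' s)) has_real_derivative w' t) (at t)"
    and w'_cont: "continuous_on {0<..<1} w'"
    and eq: "\<forall>t\<in>{0<..<1}. w' t + lam * h t * f (u t) = 0"
    and bc: "u 0 = 0" "u 1 = 0" and pos: "\<forall>t\<in>{0<..<1}. u t > 0"
    using assms(2) unfolding is_pos_solution_def is_solution_def by blast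
  have refl: "((\<lambda>t. 1 - t) has_real_derivative -1) (at t)" for t :: real
    by (auto intro!: derivative_eq_intros)
  have refl_cont: "continuous_on A (\<lambda>t. 1 - t)" for A :: "real set"
    by (intro continuous_intros)
  have "is_solution \<phi> (\<lambda>t. c (1 - t)) (\<lambda>t. d (1 - t)) (\<lambda>t. h (1 - t)) f lam (\<lambda>t. u (1 - t))"
    unfolding is_solution_def
  proof (intro conjI)
    show "continuous_on {0..1} (\<lambda>t. u (1 - t))"
      by (rule continuous_on_compose2[OF u_cont refl_cont]) auto
    show "\<exists>v' z'. (\<forall>t\<in>{0<..<1}. ((\<lambda>t. u (1 - t)) has_real_derivative v' t) (at t)) \<and>
        continuous_on {0<..<1} v' \<and>
        (\<forall>t\<in>{0<..<1}. ((\<lambda>s. d (1 - s) * \<phi> (c (1 - s) * v' s)) has_real_derivative z' t) (at t)) \<and>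
        continuous_on {0<..<1} z' \<and> (\<forall>t\<in>{0<..<1}. z' t + lam * h (1 - t) * f (u (1 - t)) = 0)"
    proof (rule exI[of _ "\<lambda>t. - u' (1 - t)"], rule exI[of _ "\<lambda>t. w' (1 - t)"], intro conjI ballI)
      fix t :: real assume t: "t \<in> {0<..<1}"
      then have t': "1 - t \<in> {0<..<1}"
        by auto
      show "((\<lambda>t. u (1 - t)) has_real_derivative - u' (1 - t)) (at t)"
        using DERIV_chain2[OF u'[rule_format, OF t'] refl] by simp
      have "(\<lambda>s. d (1 - s) * \<phi> (c (1 - s) * - u' (1 - s))) = (\<lambda>s. - (d (1 - s) * \<phi> (c (1 - s) * u' (1 - s))))"
        using odd by simp
      then show "((\<lambda>s. d (1 - s) * \<phi> (c (1 - s) * - u' (1 - s))) has_real_derivative w' (1 - t)) (at t)"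
        using DERIV_minus[OF DERIV_chain2[OF w'[rule_format, OF t'] refl]] by simp
      show "w' (1 - t) + lam * h (1 - t) * f (u (1 - t)) = 0"
        using eq t' by blast
    next
      show "continuous_on {0<..<1} (\<lambda>t. - u' (1 - t))"
        by (intro continuous_intros continuous_on_compose2[OF u'_cont refl_cont]) auto
      show "continuous_on {0<..<1} (\<lambda>t. w' (1 - t))"
        by (rule continuous_on_compose2[OF w'_cont refl_cont]) auto
    qed
  qed (use bc in simp_all)
  moreover have "\<forall>t\<in>{0<..<1}. u (1 - t) > 0"
    using pos by simp
  ultimately show ?thesis
    unfolding is_pos_solution_def by blast
qed

lemma pos_solution_flux_bound_left:
  fixes \<phi> \<psi>1 \<psi>2 c d f h u u' w' :: "real \<Rightarrow> real"
  assumes phiA: "phi_cond_A \<phi> \<psi>1 \<psi>2"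
    and h: "continuous_on {0<..<1} h" "\<forall>t\<in>{0<..<1}. h t \<ge> 0"
    and f: "\<forall>s>0. f s \<le> K * \<phi> s" "K \<ge> 0" and "lam \<ge> 0"
    and u': "\<forall>s\<in>{0<..<1}. (u has_real_derivative u' s) (at s)"
    and w': "\<forall>s\<in>{0<..<1}. ((\<lambda>s. d s * \<phi> (c s * u' s)) has_real_derivative w' s) (at s)"
    and eq: "\<forall>s\<in>{0<..<1}. w' s + lam * h s * f (u s) = 0" and pos: "\<forall>s\<in>{0<..<1}. u s > 0"
    and max: "0 < t0" "t0 \<le> 1/2" "\<forall>t\<in>{0..1}. u t \<le> u t0"
    and s: "0 < s" "s \<le> t0"
  shows "d s * \<phi> (c s * u' s) \<le> lam * K * \<phi> (u t0) * integral {s..1/2} h"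
proof -
  define W where "W s = d s * \<phi> (c s * u' s)" for s
  define B where "B = lam * K * \<phi> (u t0)"
  have "u t0 > 0"
    using pos max by auto
  then have "B \<ge> 0"
    unfolding B_def using f(2) \<open>lam \<ge> 0\<close> phi_cond_AD(5)[OF phiA] by (simp add: less_imp_le)
  have h_int: "h integrable_on {a..b}" if "0 < a" "b < 1" for a b
    using that by (intro integrable_continuous_interval continuous_on_subset[OF h(1)]) auto
  have "u' t0 = 0"
  proof (rule DERIV_local_max)
    show "(u has_real_derivative u' t0) (at t0)"
      using u' max by auto
    show "\<forall>y. \<bar>t0 - y\<bar> < min t0 (1 - t0) \<longrightarrow> u y \<le> u t0"
      using max by (auto simp: abs_if split: if_splits)
  qed (use max in auto)
  then have "W t0 = 0"
    unfolding W_def using phi_cond_AD(4)[OF phiA] by simp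
  have "- W t0 - - W s \<le> integral {s..t0} (\<lambda>x. B * h x)"
  proof (rule deriv_le_imp_diff_le_integral)
    show "((\<lambda>x. - W x) has_real_derivative - w' x) (at x)" if "x \<in> {s..t0}" for x
      unfolding W_def using w' that s max by (intro DERIV_minus) auto
    show "- w' x \<le> B * h x" if "x \<in> {s..t0}" for x
    proof -
      have x: "x \<in> {0<..<1}"
        using that s max by auto
      have "f (u x) \<le> K * \<phi> (u x)"
        using f(1) pos x by auto
      also have "\<dots> \<le> K * \<phi> (u t0)"
        using max x f(2) phi_cond_AD(2)[OF phiA] by (intro mult_left_mono) auto
      finally have "f (u x) \<le> K * \<phi> (u t0)" .
      have "- w' x = (lam * h x) * f (u x)"
        using eq x by (simp add: add_eq_0_iff)
      also have "\<dots> \<le> (lam * h x) * (K * \<phi> (u t0))"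
        using \<open>f (u x) \<le> K * \<phi> (u t0)\<close> \<open>lam \<ge> 0\<close> h(2) x by (intro mult_left_mono) auto
      finally show ?thesis
        by (simp add: B_def algebra_simps)
    qed
  qed (use s max in \<open>auto intro!: integrable_on_mult_right h_int\<close>)
  also have "\<dots> \<le> B * integral {s..1/2} h"
    using s max h(2) h_int \<open>B \<ge> 0\<close> by (simp, intro mult_left_mono integral_subset_le) auto
  finally show ?thesis
    using \<open>W t0 = 0\<close> unfolding W_def B_def by simp
qed

lemma pos_solution_left_estimate:
  fixes \<phi> \<psi>1 \<psi>2 c d f h u :: "real \<Rightarrow> real"
  assumes phiA: "phi_cond_A \<phi> \<psi>1 \<psi>2"
    and c: "cmin > 0" "\<forall>t\<in>{0..1}. cmin \<le> c t" and d: "dmin > 0" "\<forall>t\<in>{0..1}. dmin \<le> d t"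
    and h: "continuous_on {0<..<1} h" "\<forall>t\<in>{0<..<1}. h t \<ge> 0"
    and f: "\<forall>s>0. f s \<le> K * \<phi> s" "K \<ge> 0"
    and sol: "is_pos_solution \<phi> c d h f lam u" and lam: "lam \<ge> 0" "lam * K \<le> \<mu> * dmin" and "\<mu> \<ge> 0"
    and max: "0 < t0" "t0 \<le> 1/2" "\<forall>t\<in>{0..1}. u t \<le> u t0"
    and t: "0 < t" "t \<le> t0"
  shows "u t0 - u t \<le> u t0 / cmin * integral {t..t0} (\<lambda>s. the_inv_into {0..} \<psi>1 (\<mu> * integral {s..1/2} h))"
proof -
  define g where "g = the_inv_into {0..} \<psi>1"
  define GL where "GL s = integral {s..1/2} h" for s
  define M where "M = u t0"
  obtain u' w' where u': "\<forall>s\<in>{0<..<1}. (u has_real_derivative u' s) (at s)"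
    and w': "\<forall>s\<in>{0<..<1}. ((\<lambda>s. d s * \<phi> (c s * u' s)) has_real_derivative w' s) (at s)"
    and eq: "\<forall>s\<in>{0<..<1}. w' s + lam * h s * f (u s) = 0" and pos: "\<forall>s\<in>{0<..<1}. u s > 0"
    using sol unfolding is_pos_solution_def is_solution_def by blast
  note g = incr_homeo_pos_inverse[OF phi_cond_AD(6)[OF phiA], folded g_def]
  have "M > 0" and "\<phi> M > 0"
    using pos max t phi_cond_AD(5)[OF phiA] unfolding M_def by auto
  have GL_nonneg: "GL s \<ge> 0" if "s \<in> {t..t0}" for s
    unfolding GL_def using that t max h
    by (auto intro!: integral_nonneg integrable_continuous_interval continuous_on_subset[OF h(1)])
  have grad: "u' s \<le> M / cmin * g (\<mu> * GL s)" if s: "s \<in> {t..t0}" for s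
  proof -
    have s01: "s \<in> {0..1}"
      using s t max by auto
    have "\<phi> (c s * u' s) \<le> lam * K * \<phi> M * GL s / dmin"
      using pos_solution_flux_bound_left[OF phiA h f lam(1) u' w' eq pos max] s t d s01 GL_nonneg[OF s]
        lam(1) f(2) \<open>\<phi> M > 0\<close>
      unfolding M_def GL_def by (intro le_divide_of_mult_le[of dmin "d s"]) auto
    also have "\<dots> \<le> \<phi> M * (\<mu> * GL s)"
    proof -
      have "lam * K * (\<phi> M * GL s) \<le> \<mu> * dmin * (\<phi> M * GL s)"
        using lam(2) GL_nonneg[OF s] \<open>\<phi> M > 0\<close> by (intro mult_right_mono) auto
      then show ?thesis
        using d(1) by (simp add: divide_le_eq algebra_simps)
    qed
    finally have "c s * u' s \<le> M * g (\<mu> * GL s)"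
      unfolding g_def using phiA \<open>M > 0\<close> GL_nonneg[OF s] \<open>\<mu> \<ge> 0\<close> by (intro phi_cond_A_le_imp_le) auto
    then have "u' s \<le> M * g (\<mu> * GL s) / cmin"
      using c s01 \<open>M > 0\<close> g(1) GL_nonneg[OF s] \<open>\<mu> \<ge> 0\<close> by (intro le_divide_of_mult_le[of cmin "c s"]) auto
    then show ?thesis
      by simp
  qed
  have "continuous_on {t..1/2} (\<lambda>s. g (\<mu> * GL s))"
    unfolding GL_def using g(4) h \<open>\<mu> \<ge> 0\<close> t by (intro continuous_on_comp_integral_lower_limit) auto
  then have "(\<lambda>s. g (\<mu> * GL s)) integrable_on {t..t0}"
    using max by (intro integrable_continuous_interval continuous_on_subset[OF \<open>continuous_on {t..1/2} _\<close>]) auto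
  then have "u t0 - u t \<le> integral {t..t0} (\<lambda>s. M / cmin * g (\<mu> * GL s))"
    using u' grad t max by (intro deriv_le_imp_diff_le_integral integrable_on_mult_right) auto
  then show ?thesis
    unfolding g_def GL_def M_def by simp
qed

lemma pos_solution_left_lower_bound:
  fixes \<phi> \<psi>1 \<psi>2 c d f h u :: "real \<Rightarrow> real"
  assumes phiA: "phi_cond_A \<phi> \<psi>1 \<psi>2"
    and c: "cmin > 0" "\<forall>t\<in>{0..1}. cmin \<le> c t" and d: "dmin > 0" "\<forall>t\<in>{0..1}. dmin \<le> d t"
    and h: "continuous_on {0<..<1} h" "\<forall>t\<in>{0<..<1}. h t \<ge> 0"
    and f: "\<forall>s>0. f s \<le> K * \<phi> s" "K \<ge> 0"
    and small: "(\<integral>\<^sup>+ s\<in>{0<..<1/2}. ennreal (the_inv_into {0..} \<psi>1 (\<mu> * integral {s..1/2} h)) \<partial>lborel)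
      \<le> ennreal (cmin / 2)"
    and sol: "is_pos_solution \<phi> c d h f lam u" and lam: "lam \<ge> 0" "lam * K \<le> \<mu> * dmin" and "\<mu> \<ge> 0"
    and max: "0 < t0" "t0 \<le> 1/2" "\<forall>t\<in>{0..1}. u t \<le> u t0"
    and t: "0 < t" "t \<le> t0"
  shows "u t \<ge> u t0 / 2"
proof -
  define G where "G s = the_inv_into {0..} \<psi>1 (\<mu> * integral {s..1/2} h)" for s
  note g = incr_homeo_pos_inverse[OF phi_cond_AD(6)[OF phiA]]
  have "continuous_on {t..1/2} G"
    unfolding G_def using g(4) h \<open>\<mu> \<ge> 0\<close> t by (intro continuous_on_comp_integral_lower_limit) auto
  moreover have "G s \<ge> 0" if "s \<in> {t..t0}" for s
    unfolding G_def using that t max h \<open>\<mu> \<ge> 0\<close>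
    by (auto intro!: g(1) mult_nonneg_nonneg integral_nonneg integrable_continuous_interval
        continuous_on_subset[OF h(1)])
  ultimately have "ennreal (integral {t..t0} G) \<le> (\<integral>\<^sup>+ s\<in>{0<..<1/2}. ennreal (G s) \<partial>lborel)"
    using t max by (intro ennreal_integral_le_set_nn_integral continuous_on_subset[OF \<open>continuous_on {t..1/2} G\<close>]) auto
  also have "\<dots> \<le> ennreal (cmin / 2)"
    using small unfolding G_def .
  finally have "integral {t..t0} G \<le> cmin / 2"
    using c(1) by (cases "integral {t..t0} G \<ge> 0") auto
  moreover have "u t0 - u t \<le> u t0 / cmin * integral {t..t0} G"
    unfolding G_def using phiA c d h f sol lam \<open>\<mu> \<ge> 0\<close> max t by (rule pos_solution_left_estimate)
  moreover have "u t0 > 0"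
    using sol max unfolding is_pos_solution_def by auto
  ultimately have "u t0 - u t \<le> u t0 / cmin * (cmin / 2)"
    using c(1) by (meson divide_nonneg_pos less_imp_le mult_left_mono order_trans)
  then show ?thesis
    using c(1) by simp
qed

lemma pos_solution_max_not_in_left_half:
  fixes \<phi> \<psi>1 \<psi>2 c d f h :: "real \<Rightarrow> real"
  assumes phiA: "phi_cond_A \<phi> \<psi>1 \<psi>2"
    and c: "continuous_on {0..1} c" "\<forall>t\<in>{0..1}. c t > 0"
    and d: "continuous_on {0..1} d" "\<forall>t\<in>{0..1}. d t > 0"
    and h: "continuous_on {0<..<1} h" "\<forall>t\<in>{0<..<1}. h t \<ge> 0"
    and f: "\<forall>s>0. f s \<le> K * \<phi> s" "K > 0"
    and h_int: "(\<integral>\<^sup>+ s\<in>{0<..<1/2}. ennreal (the_inv_into {0..} \<psi>1 (integral {s..1/2} h)) \<partial>lborel) < \<infinity>"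
  shows "\<exists>lambar>0. \<forall>lam\<in>{0..<lambar}. \<forall>u. is_pos_solution \<phi> c d h f lam u \<longrightarrow>
           (\<forall>t0\<in>{0<..1/2}. \<exists>t\<in>{0..1}. u t0 < u t)"
proof -
  define GL where "GL s = integral {s..1/2} h" for s
  obtain cmin where cmin: "cmin > 0" "\<forall>t\<in>{0..1}. cmin \<le> c t"
    using pos_lower_bound_on_compact[OF compact_Icc c] by blast
  obtain dmin where dmin: "dmin > 0" "\<forall>t\<in>{0..1}. dmin \<le> d t"
    using pos_lower_bound_on_compact[OF compact_Icc d] by blast
  note g = incr_homeo_pos_inverse[OF phi_cond_AD(6)[OF phiA]]
  have "\<exists>\<mu>>0. (\<integral>\<^sup>+ s\<in>{0<..<1/2}. ennreal (the_inv_into {0..} \<psi>1 (\<mu> * GL s)) \<partial>lborel)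
      < ennreal (cmin / 2)"
  proof (rule small_scale_set_nn_integral_less)
    show "continuous_on {0<..<1/2} GL"
      unfolding GL_def using h(1) by (rule continuous_on_integral_lower_limit) simp
    show "\<forall>s\<in>{0<..<1/2}. GL s \<ge> 0"
      unfolding GL_def using h
      by (auto intro!: integral_nonneg integrable_continuous_interval continuous_on_subset[OF h(1)])
  qed (use g(3-5) h_int cmin in \<open>auto simp: GL_def\<close>)
  then obtain \<mu> where "\<mu> > 0" and small: "(\<integral>\<^sup>+ s\<in>{0<..<1/2}.
      ennreal (the_inv_into {0..} \<psi>1 (\<mu> * integral {s..1/2} h)) \<partial>lborel) \<le> ennreal (cmin / 2)"
    unfolding GL_def by (auto intro: less_imp_le)
  show ?thesis
  proof (intro exI[of _ "\<mu> * dmin / K"] conjI ballI allI impI)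
    show "\<mu> * dmin / K > 0"
      using \<open>\<mu> > 0\<close> dmin f by simp
    fix lam t0 :: real and u :: "real \<Rightarrow> real"
    assume lam: "lam \<in> {0..<\<mu> * dmin / K}" and sol: "is_pos_solution \<phi> c d h f lam u"
      and t0: "t0 \<in> {0<..1/2}"
    show "\<exists>t\<in>{0..1}. u t0 < u t"
    proof (rule ccontr)
      assume "\<not> (\<exists>t\<in>{0..1}. u t0 < u t)"
      then have "\<forall>t\<in>{0..1}. u t \<le> u t0"
        by (simp add: not_less)
      then have lower: "u t0 / 2 \<le> u t" if "0 < t" "t < t0" for t
        using f lam t0 that \<open>\<mu> > 0\<close>
        by (intro pos_solution_left_lower_bound[OF phiA cmin dmin h f(1) _ small sol]) (auto simp: field_simps)
      have "continuous_on {0..1} u" and "u 0 = 0" and "u t0 > 0"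
        using sol t0 unfolding is_pos_solution_def is_solution_def by auto
      then have "(u \<longlongrightarrow> 0) (at_right 0)"
        using continuous_on_Icc_at_rightD[of 0 1 u] by simp
      moreover have "eventually (\<lambda>t. u t0 / 2 \<le> u t) (at_right 0)"
        unfolding eventually_at_right_field using lower t0 by auto
      ultimately have "u t0 / 2 \<le> 0"
        by (rule tendsto_lowerbound) (use trivial_limit_at_right_real in \<open>simp add: trivial_limit_def\<close>)
      then show False
        using \<open>u t0 > 0\<close> by simp
    qed
  qed
qed

lemma pos_solution_max_not_in_right_half:
  fixes \<phi> \<psi>1 \<psi>2 c d f h :: "real \<Rightarrow> real"
  assumes phiA: "phi_cond_A \<phi> \<psi>1 \<psi>2"
    and c: "continuous_on {0..1} c" "\<forall>t\<in>{0..1}. c t > 0"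
    and d: "continuous_on {0..1} d" "\<forall>t\<in>{0..1}. d t > 0"
    and h: "continuous_on {0<..<1} h" "\<forall>t\<in>{0<..<1}. h t \<ge> 0"
    and f: "\<forall>s>0. f s \<le> K * \<phi> s" "K > 0"
    and h_int: "(\<integral>\<^sup>+ s\<in>{1/2<..<1}. ennreal (the_inv_into {0..} \<psi>1 (integral {1/2..s} h)) \<partial>lborel) < \<infinity>"
  shows "\<exists>lambar>0. \<forall>lam\<in>{0..<lambar}. \<forall>u. is_pos_solution \<phi> c d h f lam u \<longrightarrow>
           (\<forall>t0\<in>{1/2..<1}. \<exists>t\<in>{0..1}. u t0 < u t)"
proof -
  define g where "g = the_inv_into {0..} \<psi>1"
  define c' d' h' where "c' t = c (1 - t)" and "d' t = d (1 - t)" and "h' t = h (1 - t)" for t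
  have c': "continuous_on {0..1} c'" "\<forall>t\<in>{0..1}. c' t > 0"
    and d': "continuous_on {0..1} d'" "\<forall>t\<in>{0..1}. d' t > 0"
    and h': "continuous_on {0<..<1} h'" "\<forall>t\<in>{0<..<1}. h' t \<ge> 0"
    using c(2) d(2) h(2) unfolding c'_def d'_def h'_def
    by (auto intro!: continuous_on_compose2[OF c(1)] continuous_on_compose2[OF d(1)]
        continuous_on_compose2[OF h(1)] continuous_intros)
  have "continuous_on {0<..<1/2} (\<lambda>s. g (integral {s..1/2} h'))"
  proof (rule continuous_on_compose2[of "{0..}" g])
    show "continuous_on {0..} g"
      unfolding g_def using phi_cond_AD(6)[OF phiA] by (rule incr_homeo_pos_inverse(4))
    show "continuous_on {0<..<1/2} (\<lambda>s. integral {s..1/2} h')"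
      using h'(1) by (rule continuous_on_integral_lower_limit) simp
    show "(\<lambda>s. integral {s..1/2} h') ` {0<..<1/2} \<subseteq> {0..}"
      using h' by (auto intro!: integral_nonneg integrable_continuous_interval continuous_on_subset[OF h'(1)])
  qed
  from set_nn_integral_reflect_at_one[OF this]
  have "(\<integral>\<^sup>+ s\<in>{0<..<1/2}. ennreal (g (integral {s..1/2} h')) \<partial>lborel)
      = (\<integral>\<^sup>+ s\<in>{1/2<..<1}. ennreal (g (integral {1/2..s} h)) \<partial>lborel)"
    unfolding h'_def by (simp add: integral_reflect_at_one)
  with h_int obtain lambar where "lambar > 0" and left: "\<forall>lam\<in>{0..<lambar}. \<forall>u.
      is_pos_solution \<phi> c' d' h' f lam u \<longrightarrow> (\<forall>t0\<in>{0<..1/2}. \<exists>t\<in>{0..1}. u t0 < u t)"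
    using pos_solution_max_not_in_left_half[OF phiA c' d' h' f] unfolding g_def by auto
  show ?thesis
  proof (intro exI[of _ lambar] conjI ballI allI impI)
    fix lam t0 :: real and u :: "real \<Rightarrow> real"
    assume "lam \<in> {0..<lambar}" and "is_pos_solution \<phi> c d h f lam u" and "t0 \<in> {1/2..<1}"
    moreover have "is_pos_solution \<phi> c' d' h' f lam (\<lambda>t. u (1 - t))"
      unfolding c'_def d'_def h'_def
      using is_pos_solution_reflect[OF phi_cond_AD(3)[OF phiA] \<open>is_pos_solution \<phi> c d h f lam u\<close>] .
    moreover have "1 - t0 \<in> {0<..1/2}"
      using \<open>t0 \<in> {1/2..<1}\<close> by simp
    ultimately obtain t where "t \<in> {0..1}" and "u (1 - (1 - t0)) < u (1 - t)"
      using left by blast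
    then show "\<exists>t\<in>{0..1}. u t0 < u t"
      by (intro bexI[of _ "1 - t"]) auto
  qed (rule \<open>lambar > 0\<close>)
qed

lemma pos_solution_interior_max:
  assumes "is_pos_solution \<phi> c d h f lam u"
  obtains t0 where "t0 \<in> {0<..<1}" and "\<forall>t\<in>{0..1}. u t \<le> u t0"
proof -
  have "continuous_on {0..1} u" and "u 0 = 0" "u 1 = 0" and "u (1/2) > 0"
    using assms unfolding is_pos_solution_def is_solution_def by auto
  then obtain t0 where "t0 \<in> {0..1}" and max: "\<forall>t\<in>{0..1}. u t \<le> u t0"
    using continuous_attains_sup[of "{0..1}" u] by auto
  have "u t0 > 0"
    using max[rule_format, of "1/2"] \<open>u (1/2) > 0\<close> by simp
  then have "t0 \<noteq> 0" "t0 \<noteq> 1"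
    using \<open>u 0 = 0\<close> \<open>u 1 = 0\<close> by auto
  then have "t0 \<in> {0<..<1}"
    using \<open>t0 \<in> {0..1}\<close> by auto
  then show ?thesis
    using that max by blast
qed

theorem theorem3p7:
  fixes \<phi> \<psi>1 \<psi>2 c d f h :: "real \<Rightarrow> real" and f0 finf :: real
  assumes phiA: "phi_cond_A \<phi> \<psi>1 \<psi>2"
    and c: "continuous_on {0..1} c" "\<forall>t\<in>{0..1}. c t > 0"
    and d: "continuous_on {0..1} d" "\<forall>t\<in>{0..1}. d t > 0"
    and f: "continuous_on {0..} f" "\<forall>s\<ge>0. f s \<ge> 0" "\<forall>s>0. f s > 0"
    and h: "continuous_on {0<..<1} h" "\<forall>t\<in>{0<..<1}. h t \<ge> 0" "\<exists>t\<in>{0<..<1}. h t \<noteq> 0"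
    and h_int:
      "(\<integral>\<^sup>+ s\<in>{0<..<1/2}. ennreal (the_inv_into {0..} \<psi>1 (integral {s..1/2} h)) \<partial>lborel)
       + (\<integral>\<^sup>+ s\<in>{1/2<..<1}. ennreal (the_inv_into {0..} \<psi>1 (integral {1/2..s} h)) \<partial>lborel) < \<infinity>"
    and hpos: "0 \<le> alpha_h h" "alpha_h h < gamma1_h h" "gamma1_h h < gamma2_h h"
              "gamma2_h h < beta_h h" "beta_h h \<le> 1"
    and f0: "((\<lambda>s. f s / \<phi> s) \<longlongrightarrow> f0) (at_right 0)" "0 \<le> f0"
    and finf: "((\<lambda>s. f s / \<phi> s) \<longlongrightarrow> finf) at_top" "0 \<le> finf"
  shows "\<exists>lambar>0. \<forall>lam\<in>{0..<lambar}. \<not> (\<exists>u. is_pos_solution \<phi> c d h f lam u)"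
proof -
  have "continuous_on {0<..} f"
    using f(1) by (rule continuous_on_subset) auto
  then obtain K where "K > 0" and K: "\<forall>s>0. f s \<le> K * \<phi> s"
    using le_const_mult_of_ratio_tendsto[OF _ phi_cond_AD(1)[OF phiA] _ f0(1) finf(1)]
      phi_cond_AD(5)[OF phiA] by blast
  obtain lam1 where "lam1 > 0" and left: "\<forall>lam\<in>{0..<lam1}. \<forall>u. is_pos_solution \<phi> c d h f lam u \<longrightarrow>
      (\<forall>t0\<in>{0<..1/2}. \<exists>t\<in>{0..1}. u t0 < u t)"
    using pos_solution_max_not_in_left_half[OF phiA c d h(1,2) K \<open>K > 0\<close>] h_int by (auto simp: less_top)
  obtain lam2 where "lam2 > 0" and right: "\<forall>lam\<in>{0..<lam2}. \<forall>u. is_pos_solution \<phi> c d h f lam u \<longrightarrow>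
      (\<forall>t0\<in>{1/2..<1}. \<exists>t\<in>{0..1}. u t0 < u t)"
    using pos_solution_max_not_in_right_half[OF phiA c d h(1,2) K \<open>K > 0\<close>] h_int by (auto simp: less_top)
  show ?thesis
  proof (intro exI[of _ "min lam1 lam2"] conjI ballI notI)
    fix lam assume "lam \<in> {0..<min lam1 lam2}" and "\<exists>u. is_pos_solution \<phi> c d h f lam u"
    then obtain u where "lam \<in> {0..<lam1}" "lam \<in> {0..<lam2}" and sol: "is_pos_solution \<phi> c d h f lam u"
      by auto
    obtain t0 where "t0 \<in> {0<..<1}" and max: "\<forall>t\<in>{0..1}. u t \<le> u t0"
      using pos_solution_interior_max[OF sol] .
    then have "t0 \<in> {0<..1/2} \<or> t0 \<in> {1/2..<1}"
      by auto
    then obtain t where "t \<in> {0..1}" and "u t0 < u t"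
      using left right \<open>lam \<in> {0..<lam1}\<close> \<open>lam \<in> {0..<lam2}\<close> sol by blast
    then show False
      using max by force
  qed (use \<open>lam1 > 0\<close> \<open>lam2 > 0\<close> in simp)
qed

end
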